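(* Let $G$ be a finite, simple, connected, triangle-free cubic graph. If $G$ has a bridge, then for every valid labeling $\Lambda$ of $\mathfrak{L}_2(G)$ there is a reduced clique $\mathbb{X}\in\mathcal{X}$ which is a Type A self-intersection of some cycle in $\Gamma_\Lambda$.
   Context: $\mathcal{L}(H)$ is the line graph of $H$. Let $\mathcal{T}$ be the set of triangles of $\mathcal{L}(\mathcal{L}(G))$ formed by the three edges of a triangle of $\mathcal{L}(G)$. $\mathfrak{L}_2(G)$ has the vertex set of $\mathcal{L}(\mathcal{L}(G))$ and the edges of $\mathcal{L}(\mathcal{L}(G))$ not in any triangle of $\mathcal{T}$. For each edge $e$ of $G$, the reduced clique $\mathbb{X}_e$ is the subgraph of $\mathfrak{L}_2(G)$ on the four edges of $\mathcal{L}(G)$ incident to $e$, with all edges of $\mathfrak{L}_2(G)$ among them; it is a 4-cycle. $\mathcal{X}$ is the set of reduced cliques. A labeling $\Lambda$ gives each edge of $\mathfrak{L}_2(G)$ a label in $\{0,1\}$ ($1$ = open); it is valid if in every reduced clique each vertex is incident to two edges of that clique with different labels. $\Gamma_\Lambda$ is the set of connected components (cycles) of the subgraph formed by open edges. $\mathbb{X}$ is a self-intersection of $\gamma\in\Gamma_\Lambda$ if both open edges of $\mathbb{X}$ lie on $\gamma$. Writing $\mathbb{X}$ as the 4-cycle $(x_1,x_2,x_3,x_4)$ with open edges $x_1x_2,x_3x_4$, deleting them from $\gamma$ leaves two vertex-disjoint paths with endpoints $x_1,\dots,x_4$; the self-intersection is of Type A if these paths connect $x_1$ with $x_3$ and $x_2$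 with $x_4$ (and of Type B if they connect $x_2$ with $x_3$ and $x_4$ with $x_1$). *)

theory Defs
  imports Main
begin

definition simple_graph :: "'a set \<Rightarrow> 'a set set \<Rightarrow> bool" where
  "simple_graph V E \<longleftrightarrow> (\<forall>e\<in>E. \<exists>u v. u \<in> V \<and> v \<in> V \<and> u \<noteq> v \<and> e = {u, v})"

definition reach :: "'a set set \<Rightarrow> 'a \<Rightarrow> 'a \<Rightarrow> bool" where
  "reach F = (\<lambda>x y. {x, y} \<in> F)\<^sup>*\<^sup>*"

definition connected_graph :: "'a set \<Rightarrow> 'a set set \<Rightarrow> bool" where
  "connected_graph V E \<longleftrightarrow> V \<noteq> {} \<and> (\<forall>u\<in>V. \<forall>v\<in>V. reach E u v)"

definition degree :: "'a set set \<Rightarrow> 'a \<Rightarrow> nat" where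
  "degree E v = card {e \<in> E. v \<in> e}"

definition cubic :: "'a set \<Rightarrow> 'a set set \<Rightarrow> bool" where
  "cubic V E \<longleftrightarrow> (\<forall>v\<in>V. degree E v = 3)"

definition triangle_free :: "'a set set \<Rightarrow> bool" where
  "triangle_free E \<longleftrightarrow> \<not> (\<exists>u v w. {u, v} \<in> E \<and> {v, w} \<in> E \<and> {u, w} \<in> E)"

definition is_bridge :: "'a set set \<Rightarrow> 'a set \<Rightarrow> bool" where
  "is_bridge E b \<longleftrightarrow> b \<in> E \<and> (\<forall>u v. b = {u, v} \<longrightarrow> \<not> reach (E - {b}) u v)"

text \<open>Edge set of the line graph (its vertex set is the edge set E itself).\<close>
definition line_edges :: "'a set set \<Rightarrow> 'a set set set" where
  "line_edges E = {{e, f} | e f. e \<in> E \<and> f \<in> E \<and> e \<noteq> f \<and> e \<inter> f \<noteq> {}}"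

text \<open>Edges of L2(G): edges of L(L(G)) not lying in a triangle of L(L(G)) formed
  by the three edges of a triangle {e1,e2,e3} of L(G).\<close>
definition l2_edges :: "'a set set \<Rightarrow> 'a set set set set" where
  "l2_edges E = {d \<in> line_edges (line_edges E).
     \<not> (\<exists>e1 e2 e3. {e1, e2} \<in> line_edges E \<and> {e2, e3} \<in> line_edges E \<and>
                   {e1, e3} \<in> line_edges E \<and> d \<subseteq> {{e1, e2}, {e2, e3}, {e1, e3}})}"

text \<open>Reduced clique X_e: vertices are the edges of L(G) incident to e,
  edges are all L2(G)-edges among them.\<close>
definition rc_verts :: "'a set set \<Rightarrow> 'a set \<Rightarrow> 'a set set set" where
  "rc_verts E e = {l \<in> line_edges E. e \<in> l}"

definition rc_edges :: "'a set set \<Rightarrow> 'a set \<Rightarrow> 'a set set set set" where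
  "rc_edges E e = {d \<in> l2_edges E. d \<subseteq> rc_verts E e}"

text \<open>Labelings: True = label 1 = open, False = label 0.\<close>
definition valid_labeling :: "'a set set \<Rightarrow> ('a set set set \<Rightarrow> bool) \<Rightarrow> bool" where
  "valid_labeling E \<Lambda> \<longleftrightarrow>
     (\<forall>e\<in>E. \<forall>x\<in>rc_verts E e. \<exists>d1\<in>rc_edges E e. \<exists>d2\<in>rc_edges E e.
         x \<in> d1 \<and> x \<in> d2 \<and> \<Lambda> d1 \<noteq> \<Lambda> d2)"

definition open_edges :: "'a set set \<Rightarrow> ('a set set set \<Rightarrow> bool) \<Rightarrow> 'a set set set set" where
  "open_edges E \<Lambda> = {d \<in> l2_edges E. \<Lambda> d}"

text \<open>Connected components (given by their edge sets) of the graph with edge set F.\<close>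
definition components :: "'a set set \<Rightarrow> 'a set set set" where
  "components F = {{d \<in> F. \<exists>w\<in>d. reach F v w} | v. \<exists>d\<in>F. v \<in> d}"

definition Gamma :: "'a set set \<Rightarrow> ('a set set set \<Rightarrow> bool) \<Rightarrow> 'a set set set set set" where
  "Gamma E \<Lambda> = components (open_edges E \<Lambda>)"

text \<open>X_e, written as the 4-cycle (x1,x2,x3,x4) with open edges x1x2 and x3x4,
  is a Type A self-intersection of the cycle \<gamma>: both open edges lie on \<gamma>, and
  deleting them from \<gamma> leaves paths joining x1 with x3 and x2 with x4.\<close>
definition typeA_self_intersection ::
  "'a set set \<Rightarrow> ('a set set set \<Rightarrow> bool) \<Rightarrow> 'a set \<Rightarrow> 'a set set set set \<Rightarrow> bool" where
  "typeA_self_intersection E \<Lambda> e \<gamma> \<longleftrightarrow>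
     (\<exists>x1 x2 x3 x4. distinct [x1, x2, x3, x4] \<and>
        rc_verts E e = {x1, x2, x3, x4} \<and>
        rc_edges E e = {{x1, x2}, {x2, x3}, {x3, x4}, {x4, x1}} \<and>
        \<Lambda> {x1, x2} \<and> \<Lambda> {x3, x4} \<and>
        {x1, x2} \<in> \<gamma> \<and> {x3, x4} \<in> \<gamma> \<and>
        reach (\<gamma> - {{x1, x2}, {x3, x4}}) x1 x3 \<and>
        reach (\<gamma> - {{x1, x2}, {x3, x4}}) x2 x4)"

end

theory Submission
  imports Defs
begin

text \<open>
  Let \<open>b = uv\<close> be a bridge, with further edges \<open>f\<^sub>1, f\<^sub>2\<close> at \<open>u\<close> and \<open>g\<^sub>1, g\<^sub>2\<close> at \<open>v\<close>.
  As \<open>G\<close> is cubic and triangle-free, the reduced clique of \<open>b\<close> is the 4-cycle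
  \<open>bf\<^sub>1, bg\<^sub>1, bf\<^sub>2, bg\<^sub>2\<close>, and validity forces its labels to alternate; after swapping
  \<open>g\<^sub>1, g\<^sub>2\<close> the open edges are \<open>bf\<^sub>1 bg\<^sub>1\<close> and \<open>bf\<^sub>2 bg\<^sub>2\<close>.
  Every vertex \<open>ef\<close> of \<open>L(G)\<close> has exactly one open edge in each of the reduced cliques
  of \<open>e\<close> and \<open>f\<close>, so the open edges form a 2-regular graph, and deleting the two open
  edges of \<open>X\<^sub>b\<close> leaves exactly their four endpoints of odd degree.
  Any other open edge joins \<open>ef\<close> to \<open>eg\<close> with \<open>e \<noteq> b\<close>; the common endpoints of these
  two pairs are the ends of \<open>e\<close>, hence on the same side of the bridge. So the odd vertex
  that the handshake lemma provides in the component of \<open>bf\<^sub>1\<close> must be \<open>bf\<^sub>2\<close>, and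
  likewise \<open>bg\<^sub>1\<close> is joined to \<open>bg\<^sub>2\<close>: a Type A self-intersection.
\<close>

section \<open>Reachability\<close>

lemma reach_refl: "reach F x x"
  unfolding reach_def by simp

lemma reach_step: "reach F x y \<Longrightarrow> {y, z} \<in> F \<Longrightarrow> reach F x z"
  unfolding reach_def by (rule rtranclp.rtrancl_into_rtrancl)

lemma reach_induct [consumes 1, case_names refl step]:
  assumes "reach F x y"
    and "P x"
    and "\<And>y z. reach F x y \<Longrightarrow> {y, z} \<in> F \<Longrightarrow> P y \<Longrightarrow> P z"
  shows "P y"
  using assms(1) unfolding reach_def
  by (induction rule: rtranclp_induct) (auto intro: assms(2,3) simp: reach_def)

lemma reach_edge: "{x, y} \<in> F \<Longrightarrow> reach F x y"
  by (rule reach_step[OF reach_refl])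

lemma reach_trans: "reach F x y \<Longrightarrow> reach F y z \<Longrightarrow> reach F x z"
  unfolding reach_def by (rule rtranclp_trans)

lemma reach_sym: "reach F x y \<Longrightarrow> reach F y x"
proof (induction rule: reach_induct)
  case (step y z)
  then have "reach F z y" by (simp add: reach_edge insert_commute)
  then show ?case using step.IH by (rule reach_trans)
qed (rule reach_refl)

lemma reach_mono: "reach F x y \<Longrightarrow> F \<subseteq> F' \<Longrightarrow> reach F' x y"
  by (induction rule: reach_induct) (auto intro: reach_refl reach_step)

lemma reach_in_edge: "reach F x y \<Longrightarrow> y \<noteq> x \<Longrightarrow> \<exists>d\<in>F. y \<in> d"
  by (induction rule: reach_induct) auto

lemma reach_invariant:
  assumes "reach F x y" and "\<And>a c. {a, c} \<in> F \<Longrightarrow> P a = P c"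
  shows "P x = P y"
  using assms by (induction rule: reach_induct) auto

lemma reach_in_component:
  assumes "reach F v y" and "reach (F - R) y z"
  shows "reach ({d \<in> F. \<exists>w\<in>d. reach F v w} - R) y z"
  using assms(2)
proof (induction rule: reach_induct)
  case (step z z')
  have "reach F v z" using assms(1) reach_mono[OF step.hyps(1)] by (blast intro: reach_trans)
  with step show ?case by (blast intro: reach_step)
qed (rule reach_refl)

section \<open>Odd-degree vertices\<close>

lemma sum_degree_eq_sum_card_Int:
  assumes "finite F" and "finite K"
  shows "(\<Sum>y\<in>K. degree F y) = (\<Sum>d\<in>F. card (d \<inter> K))"
proof -
  have "(\<Sum>y\<in>K. degree F y) = (\<Sum>y\<in>K. \<Sum>d\<in>F. if y \<in> d then 1 else 0)"
    unfolding degree_def using assms(1) by (simp add: sum.If_cases Int_def)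
  also have "\<dots> = (\<Sum>d\<in>F. \<Sum>y\<in>K. if y \<in> d then 1 else 0)"
    by (rule sum.swap)
  also have "\<dots> = (\<Sum>d\<in>F. card (d \<inter> K))"
    using assms(2) by (simp add: sum.If_cases Int_commute)
  finally show ?thesis .
qed

text \<open>The handshake lemma, applied to the component of \<open>x\<close>.\<close>
lemma reach_other_odd_degree:
  assumes "finite F" and two: "\<And>d. d \<in> F \<Longrightarrow> card d = 2" and "odd (degree F x)"
  obtains y where "y \<noteq> x" "reach F x y" "odd (degree F y)"
proof (rule ccontr)
  assume no_partner: "\<not> thesis"
  define K where "K = {y. reach F x y}"
  have "K \<subseteq> insert x (\<Union>F)"
    unfolding K_def using reach_in_edge by fastforce
  moreover have "finite (\<Union>F)"
    using assms(1) two by (metis finite_Union card.infinite zero_neq_numeral)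
  ultimately have "finite K" by (meson finite_insert finite_subset)
  have "x \<in> K" unfolding K_def by (simp add: reach_refl)
  have "even (card (d \<inter> K))" if dF: "d \<in> F" for d
  proof -
    obtain a c where d: "d = {a, c}" "a \<noteq> c" using two[OF dF] by (auto simp: card_2_iff)
    have "reach F a c" "reach F c a" using dF d(1) by (auto intro: reach_edge simp: insert_commute)
    then have "a \<in> K \<longleftrightarrow> c \<in> K" unfolding K_def by (blast intro: reach_trans)
    then show ?thesis using d by auto
  qed
  then have "even (\<Sum>y\<in>K. degree F y)"
    using sum_degree_eq_sum_card_Int[OF assms(1) \<open>finite K\<close>] by (simp add: dvd_sum)
  moreover have "even (\<Sum>y\<in>K - {x}. degree F y)"
    using no_partner that unfolding K_def by (auto intro: dvd_sum)
  ultimately show False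
    using assms(3) \<open>finite K\<close> \<open>x \<in> K\<close> by (simp add: sum.remove)
qed

lemma reach_unique_odd_partner:
  assumes "finite F" and "\<And>d. d \<in> F \<Longrightarrow> card d = 2" and "odd (degree F x)"
    and invariant: "\<And>a c. {a, c} \<in> F \<Longrightarrow> P a = P c"
    and unique: "\<And>z. odd (degree F z) \<Longrightarrow> P z = P x \<Longrightarrow> z = x \<or> z = y"
  shows "reach F x y"
proof -
  obtain z where z: "z \<noteq> x" "reach F x z" "odd (degree F z)"
    using reach_other_odd_degree[OF assms(1-3)] .
  have "P x = P z" by (rule reach_invariant[where P = P, OF z(2) invariant])
  then have "z = y" using unique[OF z(3)] z(1) by simp
  then show ?thesis using z(2) by simp
qed

lemma odd_degree_Diff_two_edges:
  assumes "finite F" and even: "\<And>z. even (degree F z)"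
    and "{x1, x2} \<in> F" "{x3, x4} \<in> F" "distinct [x1, x2, x3, x4]"
  shows "odd (degree (F - {{x1, x2}, {x3, x4}}) z) \<longleftrightarrow> z \<in> {x1, x2, x3, x4}"
proof -
  let ?R = "{{x1, x2}, {x3, x4}}"
  have sub: "{d \<in> ?R. z \<in> d} \<subseteq> {d \<in> F. z \<in> d}" using assms(3,4) by blast
  have "degree (F - ?R) z = card ({d \<in> F. z \<in> d} - {d \<in> ?R. z \<in> d})"
    unfolding degree_def by (rule arg_cong[where f = card]) blast
  also have "\<dots> = degree F z - card {d \<in> ?R. z \<in> d}"
    unfolding degree_def by (rule card_Diff_subset[OF _ sub]) simp
  finally have "degree (F - ?R) z = degree F z - card {d \<in> ?R. z \<in> d}" .
  moreover have "card {d \<in> ?R. z \<in> d} = (if z \<in> {x1, x2, x3, x4} then 1 else 0)"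
  proof (cases "z \<in> {x1, x2}")
    case True
    then have "{d \<in> ?R. z \<in> d} = {{x1, x2}}" using assms(5) by auto
    then show ?thesis using True by auto
  next
    case False
    then have "{d \<in> ?R. z \<in> d} = (if z \<in> {x3, x4} then {{x3, x4}} else {})" by auto
    then show ?thesis using False by simp
  qed
  moreover have "card {d \<in> ?R. z \<in> d} \<le> degree F z"
    unfolding degree_def using assms(1) sub by (intro card_mono) auto
  ultimately show ?thesis using even[of z] by (auto elim: oddE)
qed

section \<open>The line graph and \<open>\<L>\<^sub>2(G)\<close>\<close>

lemma doubleton_mem_line_edges:
  "{a, b} \<in> line_edges E \<longleftrightarrow> a \<in> E \<and> b \<in> E \<and> a \<noteq> b \<and> a \<inter> b \<noteq> {}"
  unfolding line_edges_def by (auto simp: doubleton_eq_iff)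

lemma finite_line_edges: "finite E \<Longrightarrow> finite (line_edges E)"
  by (rule finite_subset[of _ "Pow E"]) (auto simp: line_edges_def)

lemma mem_line_edgesE:
  assumes "l \<in> line_edges E"
  obtains a b where "l = {a, b}" "a \<in> E" "b \<in> E" "a \<noteq> b" "a \<inter> b \<noteq> {}"
  using assms unfolding line_edges_def by blast

lemma mem_line_edges_containing:
  assumes "l \<in> line_edges E" and "x \<in> l"
  obtains f where "l = {x, f}" "x \<in> E" "f \<in> E" "x \<noteq> f" "x \<inter> f \<noteq> {}"
proof -
  obtain a b where l: "l = {a, b}" "a \<in> E" "b \<in> E" "a \<noteq> b" "a \<inter> b \<noteq> {}"
    using assms(1) by (rule mem_line_edgesE)
  show thesis
  proof (cases "x = a")
    case True
    then show thesis using l by (intro that) auto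
  next
    case False
    then have "x = b" using l(1) assms(2) by simp
    then show thesis using l by (intro that) (auto simp: Int_commute)
  qed
qed

text \<open>A triangle of \<open>\<T>\<close> through \<open>ef\<close> and \<open>eg\<close> exists exactly when \<open>f\<close> and \<open>g\<close> meet.\<close>
lemma mem_l2_edges_iff:
  "d \<in> l2_edges E \<longleftrightarrow>
     (\<exists>e f g. d = {{e, f}, {e, g}} \<and> e \<in> E \<and> f \<in> E \<and> g \<in> E \<and> e \<noteq> f \<and> e \<noteq> g \<and>
        e \<inter> f \<noteq> {} \<and> e \<inter> g \<noteq> {} \<and> f \<inter> g = {})"
  (is "_ \<longleftrightarrow> (\<exists>e f g. ?l2 e f g)")
proof
  assume d: "d \<in> l2_edges E"
  then have "d \<in> line_edges (line_edges E)" by (simp add: l2_edges_def)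
  then obtain l1 l2 where l: "d = {l1, l2}" "l1 \<in> line_edges E" "l2 \<in> line_edges E"
      "l1 \<noteq> l2" "l1 \<inter> l2 \<noteq> {}"
    by (rule mem_line_edgesE)
  then obtain e where "e \<in> l1" "e \<in> l2" by blast
  obtain f where f: "l1 = {e, f}" "e \<in> E" "f \<in> E" "e \<noteq> f" "e \<inter> f \<noteq> {}"
    by (rule mem_line_edges_containing[OF l(2) \<open>e \<in> l1\<close>])
  obtain g where g: "l2 = {e, g}" "e \<in> E" "g \<in> E" "e \<noteq> g" "e \<inter> g \<noteq> {}"
    by (rule mem_line_edges_containing[OF l(3) \<open>e \<in> l2\<close>])
  have "f \<inter> g = {}"
  proof (rule ccontr)
    assume "f \<inter> g \<noteq> {}"
    then have "{f, g} \<in> line_edges E"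
      using f g l(4) by (auto simp: doubleton_mem_line_edges)
    then have "{e, f} \<in> line_edges E \<and> {f, g} \<in> line_edges E \<and> {e, g} \<in> line_edges E \<and>
        d \<subseteq> {{e, f}, {f, g}, {e, g}}"
      using l(2,3) unfolding l(1) f(1) g(1) by auto
    moreover have "\<not> (\<exists>e1 e2 e3. {e1, e2} \<in> line_edges E \<and> {e2, e3} \<in> line_edges E \<and>
        {e1, e3} \<in> line_edges E \<and> d \<subseteq> {{e1, e2}, {e2, e3}, {e1, e3}})"
      using d unfolding l2_edges_def by simp
    ultimately show False by blast
  qed
  then show "\<exists>e f g. ?l2 e f g" using l(1) f g by blast
next
  assume "\<exists>e f g. ?l2 e f g"
  then obtain e f g where l2: "?l2 e f g" by auto
  have "d \<in> line_edges (line_edges E)"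
    using l2 by (auto simp: doubleton_mem_line_edges doubleton_eq_iff)
  moreover have "\<not> ({e1, e2} \<in> line_edges E \<and> {e2, e3} \<in> line_edges E \<and>
      {e1, e3} \<in> line_edges E \<and> d \<subseteq> {{e1, e2}, {e2, e3}, {e1, e3}})" for e1 e2 e3
  proof
    assume triangle: "{e1, e2} \<in> line_edges E \<and> {e2, e3} \<in> line_edges E \<and>
      {e1, e3} \<in> line_edges E \<and> d \<subseteq> {{e1, e2}, {e2, e3}, {e1, e3}}"
    have "e1 \<inter> e2 \<noteq> {}" "e2 \<inter> e3 \<noteq> {}" "e1 \<inter> e3 \<noteq> {}"
      using triangle by (simp_all add: doubleton_mem_line_edges)
    then have meet: "x \<inter> y \<noteq> {}" if "x \<in> {e1, e2, e3}" "y \<in> {e1, e2, e3}" "x \<noteq> y" for x y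
      using that by (auto simp: Int_commute)
    have "\<Union>d \<subseteq> {e1, e2, e3}" using triangle by blast
    moreover have "f \<in> \<Union>d" "g \<in> \<Union>d" using l2 by simp_all
    ultimately have "f \<in> {e1, e2, e3}" "g \<in> {e1, e2, e3}" by blast+
    moreover have "f \<noteq> g" using l2 by auto
    ultimately have "f \<inter> g \<noteq> {}" by (rule meet)
    then show False using l2 by simp
  qed
  ultimately show "d \<in> l2_edges E" unfolding l2_edges_def mem_Collect_eq not_ex by blast
qed

lemma l2_edgesE:
  assumes "d \<in> l2_edges E"
  obtains e f g where "d = {{e, f}, {e, g}}" "e \<in> E" "f \<in> E" "g \<in> E" "e \<noteq> f" "e \<noteq> g"
    "e \<inter> f \<noteq> {}" "e \<inter> g \<noteq> {}" "f \<inter> g = {}"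
  using assms unfolding mem_l2_edges_iff by auto

lemma l2_edges_subset: "l2_edges E \<subseteq> line_edges (line_edges E)"
  unfolding l2_edges_def by blast

lemma card_l2_edge:
  assumes "d \<in> l2_edges E"
  shows "card d = 2"
proof -
  obtain e f g where d: "d = {{e, f}, {e, g}}" "e \<inter> f \<noteq> {}" "f \<inter> g = {}"
    using assms by (rule l2_edgesE)
  then have "f \<noteq> g" by blast
  then have "{e, f} \<noteq> {e, g}" by (auto simp: doubleton_eq_iff)
  then show ?thesis using d(1) by simp
qed

lemma finite_l2_edges: "finite E \<Longrightarrow> finite (l2_edges E)"
  using l2_edges_subset finite_line_edges by (metis finite_subset)

lemma l2_edge_in_rc_edges:
  assumes "{{e, f}, {e, g}} \<in> l2_edges E"
  shows "{{e, f}, {e, g}} \<in> rc_edges E e"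
proof -
  have "{{e, f}, {e, g}} \<in> line_edges (line_edges E)" using assms l2_edges_subset by blast
  then have "{e, f} \<in> line_edges E" "{e, g} \<in> line_edges E"
    by (simp_all add: doubleton_mem_line_edges)
  then show ?thesis using assms unfolding rc_edges_def rc_verts_def by simp
qed

lemma rc_edges_disjoint:
  assumes "e \<noteq> f"
  shows "rc_edges E e \<inter> rc_edges E f = {}"
proof (rule ccontr)
  assume "rc_edges E e \<inter> rc_edges E f \<noteq> {}"
  then obtain d where d: "d \<in> l2_edges E" "d \<subseteq> rc_verts E e" "d \<subseteq> rc_verts E f"
    unfolding rc_edges_def by blast
  have "l = {e, f}" if "l \<in> d" for l
  proof -
    have "l \<in> line_edges E" "e \<in> l" "f \<in> l" using d that unfolding rc_verts_def by blast+
    then show ?thesis using assms by (elim mem_line_edgesE) auto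
  qed
  then have "d \<subseteq> {{e, f}}" by blast
  then have "card d \<le> 1" using card_mono[of "{{e, f}}" d] by simp
  then show False using card_l2_edge[OF d(1)] by simp
qed

section \<open>Reduced cliques of cubic triangle-free graphs\<close>

lemma simple_graph_edgeE:
  assumes "simple_graph V E" and "e \<in> E"
  obtains p q where "e = {p, q}" "p \<noteq> q" "p \<in> V" "q \<in> V"
  using assms unfolding simple_graph_def by blast

lemma simple_graph_edge_eq:
  assumes "simple_graph V E" and "e \<in> E" and "p \<in> e" "q \<in> e" "p \<noteq> q"
  shows "e = {p, q}"
  using assms by (elim simple_graph_edgeE) auto

lemma simple_graph_edges_Int:
  assumes "simple_graph V E" and "e \<in> E" "f \<in> E" "e \<noteq> f" and "p \<in> e" "p \<in> f"
  shows "e \<inter> f = {p}"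
proof -
  have "q = p" if "q \<in> e" "q \<in> f" for q
    using simple_graph_edge_eq[OF assms(1,2)] simple_graph_edge_eq[OF assms(1,3)] assms(4-6) that
    by metis
  then show ?thesis using assms(5,6) by blast
qed

lemma simple_graph_finite_edges:
  assumes "simple_graph V E" and "finite V"
  shows "finite E"
proof (rule finite_subset)
  show "E \<subseteq> Pow V" using assms(1) by (auto elim: simple_graph_edgeE)
qed (use assms(2) in simp)

lemma triangle_free_edges_disjoint:
  assumes "simple_graph V E" "triangle_free E" and "{u, v} \<in> E"
    and "f \<in> E" "f \<noteq> {u, v}" "u \<in> f" and "g \<in> E" "g \<noteq> {u, v}" "v \<in> g"
  shows "f \<inter> g = {}"
proof -
  obtain a where f: "f = {u, a}" "a \<noteq> u"
    using assms(1,4,6) by (elim simple_graph_edgeE) auto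
  obtain c where g: "g = {v, c}" "c \<noteq> v"
    using assms(1,7,9) by (elim simple_graph_edgeE) auto
  have "u \<noteq> v" using assms(1,3) by (elim simple_graph_edgeE) (auto simp: doubleton_eq_iff)
  moreover have "a \<noteq> v" "c \<noteq> u" using f g assms(5,8) by auto
  moreover have "a \<noteq> c"
  proof
    assume "a = c"
    then have "{u, a} \<in> E" "{a, v} \<in> E" using f g assms(4,7) by (auto simp: insert_commute)
    then show False using assms(2,3) unfolding triangle_free_def by blast
  qed
  ultimately show ?thesis using f g by auto
qed

lemma cubic_other_edges:
  assumes "simple_graph V E" "cubic V E" and "e \<in> E" "u \<in> e"
  obtains f1 f2 where "{h \<in> E. u \<in> h} - {e} = {f1, f2}" "f1 \<noteq> f2"
proof -
  have "u \<in> V" using assms(1,3,4) by (elim simple_graph_edgeE) auto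
  then have "card {h \<in> E. u \<in> h} = 3" using assms(2) unfolding cubic_def degree_def by blast
  then have "card ({h \<in> E. u \<in> h} - {e}) = 2" using assms(3,4) by (simp add: card_Diff_singleton_if)
  then show thesis using that by (auto simp: card_2_iff)
qed

lemma rc_verts_eq:
  assumes "e = {u, v}" "e \<in> E"
  shows "rc_verts E e = (\<lambda>h. {e, h}) ` ({h \<in> E. u \<in> h \<or> v \<in> h} - {e})"
proof
  show "rc_verts E e \<subseteq> (\<lambda>h. {e, h}) ` ({h \<in> E. u \<in> h \<or> v \<in> h} - {e})"
  proof
    fix l assume "l \<in> rc_verts E e"
    then obtain h where "l = {e, h}" "h \<in> E" "e \<noteq> h" "e \<inter> h \<noteq> {}"
      unfolding rc_verts_def by (blast elim: mem_line_edges_containing)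
    then show "l \<in> (\<lambda>h. {e, h}) ` ({h \<in> E. u \<in> h \<or> v \<in> h} - {e})"
      using assms(1) by blast
  qed
  show "(\<lambda>h. {e, h}) ` ({h \<in> E. u \<in> h \<or> v \<in> h} - {e}) \<subseteq> rc_verts E e"
    using assms unfolding rc_verts_def by (auto simp: doubleton_mem_line_edges)
qed

lemma rc_edges_eq:
  assumes sg: "simple_graph V E" and tf: "triangle_free E" and e: "e = {u, v}" "e \<in> E"
  shows "rc_edges E e =
    (\<lambda>(f, g). {{e, f}, {e, g}}) ` (({h \<in> E. u \<in> h} - {e}) \<times> ({h \<in> E. v \<in> h} - {e}))"
    (is "_ = ?C")
proof
  show "rc_edges E e \<subseteq> ?C"
  proof
    fix d assume d: "d \<in> rc_edges E e"
    then have "d \<in> l2_edges E" unfolding rc_edges_def by blast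
    then obtain c f g where l2: "d = {{c, f}, {c, g}}" "c \<in> E" "f \<in> E" "g \<in> E" "c \<noteq> f" "c \<noteq> g"
        "c \<inter> f \<noteq> {}" "c \<inter> g \<noteq> {}" "f \<inter> g = {}"
      by (rule l2_edgesE)
    have "e \<in> {c, f}" "e \<in> {c, g}" using d l2(1) unfolding rc_edges_def rc_verts_def by auto
    then have "c = e" using l2(7,9) by auto
    then consider "u \<in> f" "v \<in> g" | "u \<in> g" "v \<in> f" using e(1) l2(7-9) by blast
    then show "d \<in> ?C"
    proof cases
      case 1
      show ?thesis using l2 \<open>c = e\<close> 1 by (intro image_eqI[where x = "(f, g)"]) auto
    next
      case 2
      have "d = {{e, g}, {e, f}}" using l2(1) \<open>c = e\<close> by (simp add: insert_commute)
      then show ?thesis using l2 \<open>c = e\<close> 2 by (intro image_eqI[where x = "(g, f)"]) auto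
    qed
  qed
next
  show "?C \<subseteq> rc_edges E e"
  proof
    fix d assume "d \<in> ?C"
    then obtain f g where fg: "d = {{e, f}, {e, g}}" "f \<in> E" "g \<in> E" "f \<noteq> e" "g \<noteq> e" "u \<in> f" "v \<in> g"
      by auto
    have "f \<inter> g = {}" using triangle_free_edges_disjoint[OF sg tf] e fg by blast
    then have "d \<in> l2_edges E" unfolding mem_l2_edges_iff using e fg by blast
    then show "d \<in> rc_edges E e" using fg(1) l2_edge_in_rc_edges by blast
  qed
qed

lemma reduced_clique_four_cycle:
  assumes sg: "simple_graph V E" and tf: "triangle_free E" and cu: "cubic V E"
    and e: "e = {u, v}" "e \<in> E"
  obtains f1 f2 g1 g2 where
    "{h \<in> E. u \<in> h} - {e} = {f1, f2}" "{h \<in> E. v \<in> h} - {e} = {g1, g2}"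
    "distinct [{e, f1}, {e, g1}, {e, f2}, {e, g2}]"
    "rc_verts E e = {{e, f1}, {e, g1}, {e, f2}, {e, g2}}"
    "rc_edges E e = {{{e, f1}, {e, g1}}, {{e, g1}, {e, f2}}, {{e, f2}, {e, g2}}, {{e, g2}, {e, f1}}}"
proof -
  have "u \<in> e" "v \<in> e" using e(1) by simp_all
  obtain f1 f2 where Nu: "{h \<in> E. u \<in> h} - {e} = {f1, f2}" "f1 \<noteq> f2"
    using cubic_other_edges[OF sg cu e(2) \<open>u \<in> e\<close>] .
  obtain g1 g2 where Nv: "{h \<in> E. v \<in> h} - {e} = {g1, g2}" "g1 \<noteq> g2"
    using cubic_other_edges[OF sg cu e(2) \<open>v \<in> e\<close>] .
  have "u \<noteq> v" using sg e by (elim simple_graph_edgeE) (auto simp: doubleton_eq_iff)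
  have at_u: "h \<in> {f1, f2} \<longleftrightarrow> h \<in> E \<and> h \<noteq> e \<and> u \<in> h" for h
    unfolding Nu(1)[symmetric] by auto
  have at_v: "h \<in> {g1, g2} \<longleftrightarrow> h \<in> E \<and> h \<noteq> e \<and> v \<in> h" for h
    unfolding Nv(1)[symmetric] by auto
  have "v \<notin> h" if "h \<in> {f1, f2}" for h
    using at_u[of h] that simple_graph_edge_eq[OF sg, of h u v] e(1) \<open>u \<noteq> v\<close> by blast
  then have "f1 \<noteq> g1" "f1 \<noteq> g2" "f2 \<noteq> g1" "f2 \<noteq> g2" using at_v by blast+
  moreover have "f1 \<noteq> e" "f2 \<noteq> e" "g1 \<noteq> e" "g2 \<noteq> e" using at_u at_v by blast+
  ultimately have "distinct [{e, f1}, {e, g1}, {e, f2}, {e, g2}]"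
    using Nu(2) Nv(2) by (simp add: doubleton_eq_iff)
  moreover have "rc_verts E e = {{e, f1}, {e, g1}, {e, f2}, {e, g2}}"
  proof -
    have "{h \<in> E. u \<in> h \<or> v \<in> h} - {e} = {f1, f2} \<union> {g1, g2}"
      unfolding Nu(1)[symmetric] Nv(1)[symmetric] by blast
    then show ?thesis unfolding rc_verts_eq[OF e] by auto
  qed
  moreover have "rc_edges E e =
      {{{e, f1}, {e, g1}}, {{e, g1}, {e, f2}}, {{e, f2}, {e, g2}}, {{e, g2}, {e, f1}}}"
  proof -
    have "{f1, f2} \<times> {g1, g2} = {(f1, g1), (f2, g1), (f2, g2), (f1, g2)}" by auto
    then have edges: "rc_edges E e =
        {{{e, f1}, {e, g1}}, {{e, f2}, {e, g1}}, {{e, f2}, {e, g2}}, {{e, f1}, {e, g2}}}"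
      unfolding rc_edges_eq[OF sg tf e] Nu(1) Nv(1) by simp
    show ?thesis unfolding edges by (simp add: insert_commute)
  qed
  ultimately show thesis by (rule that[OF Nu(1) Nv(1)])
qed

section \<open>Valid labelings\<close>

lemma valid_labeling_alternates_at:
  assumes "valid_labeling E \<Lambda>" "e \<in> E" "x \<in> rc_verts E e"
    and "{d \<in> rc_edges E e. x \<in> d} \<subseteq> {A, B}"
  shows "\<Lambda> A \<noteq> \<Lambda> B"
proof -
  obtain d1 d2 where "d1 \<in> rc_edges E e" "d2 \<in> rc_edges E e" "x \<in> d1" "x \<in> d2" "\<Lambda> d1 \<noteq> \<Lambda> d2"
    using assms(1-3) unfolding valid_labeling_def by blast
  then have "d1 \<in> {A, B}" "d2 \<in> {A, B}" using assms(4) by blast+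
  then show ?thesis using \<open>\<Lambda> d1 \<noteq> \<Lambda> d2\<close> by auto
qed

lemma four_cycle_edges_at:
  assumes "distinct [x1, x2, x3, x4]"
  shows "{d \<in> {{x1, x2}, {x2, x3}, {x3, x4}, {x4, x1}}. x1 \<in> d} = {{x1, x2}, {x4, x1}}"
    "{d \<in> {{x1, x2}, {x2, x3}, {x3, x4}, {x4, x1}}. x2 \<in> d} = {{x1, x2}, {x2, x3}}"
    "{d \<in> {{x1, x2}, {x2, x3}, {x3, x4}, {x4, x1}}. x3 \<in> d} = {{x2, x3}, {x3, x4}}"
    "{d \<in> {{x1, x2}, {x2, x3}, {x3, x4}, {x4, x1}}. x4 \<in> d} = {{x3, x4}, {x4, x1}}"
  using assms by auto

lemma four_cycle_reverse:
  "distinct [a, b, c, d] \<longleftrightarrow> distinct [a, d, c, b]"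
  "{a, b, c, d} = {a, d, c, b}"
  "{{a, b}, {b, c}, {c, d}, {d, a}} = {{a, d}, {d, c}, {c, b}, {b, a}}"
  by (auto simp: insert_commute)

lemma valid_labeling_four_cycle:
  assumes "valid_labeling E \<Lambda>" "e \<in> E" and "distinct [x1, x2, x3, x4]"
    and "rc_verts E e = {x1, x2, x3, x4}"
    and "rc_edges E e = {{x1, x2}, {x2, x3}, {x3, x4}, {x4, x1}}"
  shows "\<Lambda> {x3, x4} = \<Lambda> {x1, x2}" "\<Lambda> {x4, x1} = \<Lambda> {x2, x3}" "\<Lambda> {x2, x3} = (\<not> \<Lambda> {x1, x2})"
proof -
  have "x1 \<in> rc_verts E e" "x2 \<in> rc_verts E e" "x3 \<in> rc_verts E e"
    using assms(4) by simp_all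
  moreover note four_cycle_edges_at[OF assms(3), folded assms(5)]
  ultimately have "\<Lambda> {x1, x2} \<noteq> \<Lambda> {x4, x1}" "\<Lambda> {x1, x2} \<noteq> \<Lambda> {x2, x3}"
      "\<Lambda> {x2, x3} \<noteq> \<Lambda> {x3, x4}"
    by (simp_all add: valid_labeling_alternates_at[OF assms(1,2)])
  then show "\<Lambda> {x3, x4} = \<Lambda> {x1, x2}" "\<Lambda> {x4, x1} = \<Lambda> {x2, x3}"
      "\<Lambda> {x2, x3} = (\<not> \<Lambda> {x1, x2})"
    by blast+
qed

lemma reduced_clique_open_four_cycle:
  assumes sg: "simple_graph V E" and tf: "triangle_free E" and cu: "cubic V E"
    and val: "valid_labeling E \<Lambda>" and e: "e = {u, v}" "e \<in> E"
  obtains f1 f2 g1 g2 where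
    "{h \<in> E. u \<in> h} - {e} = {f1, f2}" "{h \<in> E. v \<in> h} - {e} = {g1, g2}"
    "distinct [{e, f1}, {e, g1}, {e, f2}, {e, g2}]"
    "rc_verts E e = {{e, f1}, {e, g1}, {e, f2}, {e, g2}}"
    "rc_edges E e = {{{e, f1}, {e, g1}}, {{e, g1}, {e, f2}}, {{e, f2}, {e, g2}}, {{e, g2}, {e, f1}}}"
    "\<Lambda> {{e, f1}, {e, g1}}" "\<Lambda> {{e, f2}, {e, g2}}" "\<not> \<Lambda> {{e, g1}, {e, f2}}" "\<not> \<Lambda> {{e, g2}, {e, f1}}"
proof -
  obtain f1 f2 g1 g2 where cycle:
    "{h \<in> E. u \<in> h} - {e} = {f1, f2}" "{h \<in> E. v \<in> h} - {e} = {g1, g2}"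
    "distinct [{e, f1}, {e, g1}, {e, f2}, {e, g2}]"
    "rc_verts E e = {{e, f1}, {e, g1}, {e, f2}, {e, g2}}"
    "rc_edges E e = {{{e, f1}, {e, g1}}, {{e, g1}, {e, f2}}, {{e, f2}, {e, g2}}, {{e, g2}, {e, f1}}}"
    by (rule reduced_clique_four_cycle[OF sg tf cu e])
  note alt = valid_labeling_four_cycle[OF val e(2) cycle(3-5)]
  show thesis
  proof (cases "\<Lambda> {{e, f1}, {e, g1}}")
    case True
    then show thesis using alt by (intro that[OF cycle]) simp_all
  next
    case False
    have "{h \<in> E. v \<in> h} - {e} = {g2, g1}" unfolding cycle(2) by (rule insert_commute)
    moreover have "distinct [{e, f1}, {e, g2}, {e, f2}, {e, g1}]"
      using cycle(3) by (simp only: four_cycle_reverse)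
    moreover have "rc_verts E e = {{e, f1}, {e, g2}, {e, f2}, {e, g1}}"
      unfolding cycle(4) by (rule four_cycle_reverse)
    moreover have "rc_edges E e =
        {{{e, f1}, {e, g2}}, {{e, g2}, {e, f2}}, {{e, f2}, {e, g1}}, {{e, g1}, {e, f1}}}"
      unfolding cycle(5) by (rule four_cycle_reverse)
    moreover have "\<Lambda> {{e, f1}, {e, g2}}" "\<Lambda> {{e, f2}, {e, g1}}"
      "\<not> \<Lambda> {{e, g2}, {e, f2}}" "\<not> \<Lambda> {{e, g1}, {e, f1}}"
      using False alt by (simp_all add: insert_commute)
    ultimately show thesis by (rule that[OF cycle(1)])
  qed
qed

lemma card_open_edges_four_cycle_at:
  assumes "distinct [x1, x2, x3, x4]" "\<Lambda> {x1, x2}" "\<Lambda> {x3, x4}" "\<not> \<Lambda> {x2, x3}" "\<not> \<Lambda> {x4, x1}"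
    and "w \<in> {x1, x2, x3, x4}"
  shows "card {d \<in> {{x1, x2}, {x2, x3}, {x3, x4}, {x4, x1}}. w \<in> d \<and> \<Lambda> d} = 1"
proof -
  have "{d \<in> {{x1, x2}, {x2, x3}, {x3, x4}, {x4, x1}}. w \<in> d \<and> \<Lambda> d} =
      (if w \<in> {x1, x2} then {{x1, x2}} else {{x3, x4}})"
    using assms by auto
  then show ?thesis by simp
qed

lemma card_open_rc_edges_at:
  assumes sg: "simple_graph V E" and tf: "triangle_free E" and cu: "cubic V E"
    and val: "valid_labeling E \<Lambda>" and "e \<in> E" "w \<in> rc_verts E e"
  shows "card {d \<in> rc_edges E e. w \<in> d \<and> \<Lambda> d} = 1"
proof -
  obtain u v where "e = {u, v}" using sg \<open>e \<in> E\<close> by (elim simple_graph_edgeE)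
  then obtain f1 f2 g1 g2 where
    "{h \<in> E. u \<in> h} - {e} = {f1, f2}" "{h \<in> E. v \<in> h} - {e} = {g1, g2}"
    "distinct [{e, f1}, {e, g1}, {e, f2}, {e, g2}]"
    "rc_verts E e = {{e, f1}, {e, g1}, {e, f2}, {e, g2}}"
    "rc_edges E e = {{{e, f1}, {e, g1}}, {{e, g1}, {e, f2}}, {{e, f2}, {e, g2}}, {{e, g2}, {e, f1}}}"
    "\<Lambda> {{e, f1}, {e, g1}}" "\<Lambda> {{e, f2}, {e, g2}}" "\<not> \<Lambda> {{e, g1}, {e, f2}}" "\<not> \<Lambda> {{e, g2}, {e, f1}}"
    by (rule reduced_clique_open_four_cycle[OF sg tf cu val _ \<open>e \<in> E\<close>])
  note cycle = this
  have "w \<in> {{e, f1}, {e, g1}, {e, f2}, {e, g2}}" using assms(6) cycle(4) by simp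
  then show ?thesis unfolding cycle(5) by (rule card_open_edges_four_cycle_at[OF cycle(3,6-9)])
qed

lemma degree_open_edges:
  assumes sg: "simple_graph V E" and tf: "triangle_free E" and cu: "cubic V E"
    and val: "valid_labeling E \<Lambda>" and w: "w \<in> line_edges E"
  shows "degree (open_edges E \<Lambda>) w = 2"
proof -
  obtain e f where ef: "w = {e, f}" "e \<in> E" "f \<in> E" "e \<noteq> f"
    using w by (elim mem_line_edgesE)
  define open_at where "open_at c = {d \<in> rc_edges E c. w \<in> d \<and> \<Lambda> d}" for c
  have "{d \<in> open_edges E \<Lambda>. w \<in> d} = open_at e \<union> open_at f"
  proof
    show "{d \<in> open_edges E \<Lambda>. w \<in> d} \<subseteq> open_at e \<union> open_at f"
    proof
      fix d assume "d \<in> {d \<in> open_edges E \<Lambda>. w \<in> d}"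
      then have d: "d \<in> l2_edges E" "\<Lambda> d" "w \<in> d" unfolding open_edges_def by blast+
      then obtain c f' g' where "d = {{c, f'}, {c, g'}}" by (elim l2_edgesE)
      moreover have "c \<in> w" using d(3) \<open>d = _\<close> by blast
      ultimately have "d \<in> rc_edges E e \<union> rc_edges E f"
        using l2_edge_in_rc_edges d(1) ef(1) by blast
      then show "d \<in> open_at e \<union> open_at f" unfolding open_at_def using d by blast
    qed
    show "open_at e \<union> open_at f \<subseteq> {d \<in> open_edges E \<Lambda>. w \<in> d}"
      unfolding open_at_def open_edges_def rc_edges_def by blast
  qed
  moreover have "open_at e \<inter> open_at f = {}"
    using rc_edges_disjoint[OF ef(4)] unfolding open_at_def by blast
  moreover have "w \<in> rc_verts E e" "w \<in> rc_verts E f"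
    using w ef(1) unfolding rc_verts_def by simp_all
  then have "card (open_at e) = 1" "card (open_at f) = 1"
    unfolding open_at_def using card_open_rc_edges_at[OF sg tf cu val] ef(2,3) by blast+
  ultimately show ?thesis
    unfolding degree_def by (simp add: card_Un_disjoint card_ge_0_finite)
qed

lemma finite_open_edges:
  assumes "simple_graph V E" "finite V"
  shows "finite (open_edges E \<Lambda>)"
proof -
  have "finite (l2_edges E)" using assms by (intro finite_l2_edges simple_graph_finite_edges)
  then show ?thesis unfolding open_edges_def by simp
qed

lemma odd_degree_open_edges_Diff:
  assumes sg: "simple_graph V E" and "finite V" and tf: "triangle_free E" and cu: "cubic V E"
    and val: "valid_labeling E \<Lambda>"
    and "{x1, x2} \<in> open_edges E \<Lambda>" "{x3, x4} \<in> open_edges E \<Lambda>" "distinct [x1, x2, x3, x4]"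
  shows "odd (degree (open_edges E \<Lambda> - {{x1, x2}, {x3, x4}}) z) \<longleftrightarrow> z \<in> {x1, x2, x3, x4}"
proof (rule odd_degree_Diff_two_edges)
  show "finite (open_edges E \<Lambda>)" using sg assms(2) by (rule finite_open_edges)
  show "even (degree (open_edges E \<Lambda>) z)" for z
  proof (cases "z \<in> line_edges E")
    case True
    then show ?thesis using degree_open_edges[OF sg tf cu val] by simp
  next
    case False
    have "open_edges E \<Lambda> \<subseteq> line_edges (line_edges E)"
      using l2_edges_subset unfolding open_edges_def by blast
    then have "{d \<in> open_edges E \<Lambda>. z \<in> d} = {}"
      using False by (auto elim!: mem_line_edgesE)
    then have "degree (open_edges E \<Lambda>) z = 0" unfolding degree_def by (metis card.empty)
    then show ?thesis by simp
  qed
qed (use assms in auto)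

section \<open>Self-intersection at a bridge\<close>

text \<open>\<open>\<Inter>l\<close> is the common endpoint of the two edges forming the \<open>L(G)\<close>-vertex \<open>l\<close>.\<close>
definition on_side :: "'a set set \<Rightarrow> 'a set \<Rightarrow> 'a \<Rightarrow> 'a set set \<Rightarrow> bool" where
  "on_side E b u l \<longleftrightarrow> (\<exists>w\<in>\<Inter>l. reach (E - {b}) u w)"

lemma on_side_doubleton:
  assumes "simple_graph V E" "e \<in> E" "f \<in> E" "e \<noteq> f" "p \<in> e" "p \<in> f"
  shows "on_side E b u {e, f} \<longleftrightarrow> reach (E - {b}) u p"
  using simple_graph_edges_Int[OF assms] unfolding on_side_def by simp

lemma on_side_l2_edge:
  assumes sg: "simple_graph V E" and "{a, c} \<in> l2_edges E" "{a, c} \<notin> rc_edges E b"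
  shows "on_side E b u a = on_side E b u c"
proof -
  obtain e f g where l2: "{a, c} = {{e, f}, {e, g}}" "e \<in> E" "f \<in> E" "g \<in> E" "e \<noteq> f" "e \<noteq> g"
      "e \<inter> f \<noteq> {}" "e \<inter> g \<noteq> {}" "f \<inter> g = {}"
    using assms(2) by (rule l2_edgesE)
  have "e \<noteq> b" using assms(2,3) l2(1) l2_edge_in_rc_edges by metis
  obtain p q where "p \<in> e" "p \<in> f" "q \<in> e" "q \<in> g" using l2(7,8) by blast
  then have "p \<noteq> q" using l2(9) by blast
  then have "{p, q} \<in> E - {b}"
    using simple_graph_edge_eq[OF sg l2(2) \<open>p \<in> e\<close> \<open>q \<in> e\<close>] l2(2) \<open>e \<noteq> b\<close> by simp
  then have "reach (E - {b}) u p \<longleftrightarrow> reach (E - {b}) u q"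
    using reach_edge reach_sym reach_trans by metis
  then have "on_side E b u {e, f} = on_side E b u {e, g}"
    using on_side_doubleton[OF sg] l2 \<open>p \<in> e\<close> \<open>p \<in> f\<close> \<open>q \<in> e\<close> \<open>q \<in> g\<close> by metis
  then show ?thesis using l2(1) by (auto simp: doubleton_eq_iff)
qed

lemma typeA_self_intersection_if_reach:
  assumes "distinct [x1, x2, x3, x4]" "rc_verts E e = {x1, x2, x3, x4}"
    and "rc_edges E e = {{x1, x2}, {x2, x3}, {x3, x4}, {x4, x1}}"
    and "{x1, x2} \<in> open_edges E \<Lambda>" "{x3, x4} \<in> open_edges E \<Lambda>"
    and "reach (open_edges E \<Lambda> - {{x1, x2}, {x3, x4}}) x1 x3"
    and "reach (open_edges E \<Lambda> - {{x1, x2}, {x3, x4}}) x2 x4"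
  shows "\<exists>\<gamma>\<in>Gamma E \<Lambda>. typeA_self_intersection E \<Lambda> e \<gamma>"
proof
  let ?O = "open_edges E \<Lambda>"
  define \<gamma> where "\<gamma> = {d \<in> ?O. \<exists>w\<in>d. reach ?O x1 w}"
  show "\<gamma> \<in> Gamma E \<Lambda>"
    unfolding Gamma_def components_def \<gamma>_def using assms(4) by blast
  have "reach ?O x1 x2" using assms(4) by (rule reach_edge)
  moreover have "reach ?O x1 x3" using assms(6) by (rule reach_mono) blast
  ultimately have "{x1, x2} \<in> \<gamma>" "{x3, x4} \<in> \<gamma>"
    unfolding \<gamma>_def using assms(4,5) by blast+
  moreover have "reach (\<gamma> - {{x1, x2}, {x3, x4}}) x1 x3"
    unfolding \<gamma>_def by (rule reach_in_component[OF reach_refl assms(6)])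
  moreover have "reach (\<gamma> - {{x1, x2}, {x3, x4}}) x2 x4"
    unfolding \<gamma>_def by (rule reach_in_component[OF \<open>reach ?O x1 x2\<close> assms(7)])
  moreover have "\<Lambda> {x1, x2}" "\<Lambda> {x3, x4}" using assms(4,5) unfolding open_edges_def by simp_all
  ultimately show "typeA_self_intersection E \<Lambda> e \<gamma>"
    unfolding typeA_self_intersection_def using assms(1-3) by blast
qed

text \<open>Only \<open>x\<^sub>1, \<dots>, x\<^sub>4\<close> have odd degree once the two open edges of \<open>X\<^sub>e\<close> are deleted,
  and \<open>P\<close> is constant on the components of what remains.\<close>
lemma typeA_self_intersection_if_separated:
  assumes fin: "finite V" and sg: "simple_graph V E" and tf: "triangle_free E" and cu: "cubic V E"
    and val: "valid_labeling E \<Lambda>" and "e \<in> E"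
    and shape: "distinct [x1, x2, x3, x4]" "rc_verts E e = {x1, x2, x3, x4}"
      "rc_edges E e = {{x1, x2}, {x2, x3}, {x3, x4}, {x4, x1}}"
    and "\<Lambda> {x1, x2}"
    and invariant: "\<And>a c. {a, c} \<in> l2_edges E \<Longrightarrow> {a, c} \<notin> rc_edges E e \<Longrightarrow> P a = P c"
    and side: "P x1" "P x3" "\<not> P x2" "\<not> P x4"
  shows "\<exists>\<gamma>\<in>Gamma E \<Lambda>. typeA_self_intersection E \<Lambda> e \<gamma>"
proof -
  let ?O = "open_edges E \<Lambda>"
  let ?H = "?O - {{x1, x2}, {x3, x4}}"
  note alt = valid_labeling_four_cycle[OF val \<open>e \<in> E\<close> shape]
  have "rc_edges E e \<subseteq> l2_edges E" unfolding rc_edges_def by blast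
  then have open_edges: "{x1, x2} \<in> ?O" "{x3, x4} \<in> ?O" and "{x2, x3} \<notin> ?O" "{x4, x1} \<notin> ?O"
    using \<open>\<Lambda> {x1, x2}\<close> alt shape(3) unfolding open_edges_def by auto
  then have disjoint: "rc_edges E e \<inter> ?H = {}" unfolding shape(3) by auto
  have H_invariant: "P a = P c" if "{a, c} \<in> ?H" for a c
  proof (rule invariant)
    show "{a, c} \<in> l2_edges E" using that by (simp add: open_edges_def)
    show "{a, c} \<notin> rc_edges E e" using that disjoint by (metis IntI empty_iff)
  qed
  have odd_iff: "odd (degree ?H z) \<longleftrightarrow> z \<in> {x1, x2, x3, x4}" for z
    by (rule odd_degree_open_edges_Diff[OF sg fin tf cu val open_edges shape(1)])
  have finite: "finite ?H" using finite_open_edges[OF sg fin] by blast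
  have card2: "card d = 2" if "d \<in> ?H" for d
    using that card_l2_edge unfolding open_edges_def by blast
  have partner13: "z = x1 \<or> z = x3" if "odd (degree ?H z)" "P z = P x1" for z
    using odd_iff[THEN iffD1, OF that(1)] that(2) by (elim insertE emptyE) (simp_all add: side)
  have partner24: "z = x2 \<or> z = x4" if "odd (degree ?H z)" "P z = P x2" for z
    using odd_iff[THEN iffD1, OF that(1)] that(2) by (elim insertE emptyE) (simp_all add: side)
  have odd: "odd (degree ?H x1)" "odd (degree ?H x2)" by (simp_all only: odd_iff) simp_all
  have "reach ?H x1 x3"
    by (rule reach_unique_odd_partner[OF finite card2 odd(1) H_invariant partner13])
  moreover have "reach ?H x2 x4"
    by (rule reach_unique_odd_partner[OF finite card2 odd(2) H_invariant partner24])
  ultimately show ?thesis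
    by (rule typeA_self_intersection_if_reach[OF shape open_edges])
qed

lemma bridge_typeA_self_intersection:
  assumes fin: "finite V" and sg: "simple_graph V E" and tf: "triangle_free E" and cu: "cubic V E"
    and val: "valid_labeling E \<Lambda>" and br: "is_bridge E b"
  shows "\<exists>\<gamma>\<in>Gamma E \<Lambda>. typeA_self_intersection E \<Lambda> b \<gamma>"
proof -
  have "b \<in> E" using br unfolding is_bridge_def by blast
  then obtain u v where b: "b = {u, v}" using sg by (elim simple_graph_edgeE)
  have cut: "\<not> reach (E - {b}) u v" using br b unfolding is_bridge_def by blast
  obtain f1 f2 g1 g2 where cycle:
    "{h \<in> E. u \<in> h} - {b} = {f1, f2}" "{h \<in> E. v \<in> h} - {b} = {g1, g2}"
    "distinct [{b, f1}, {b, g1}, {b, f2}, {b, g2}]"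
    "rc_verts E b = {{b, f1}, {b, g1}, {b, f2}, {b, g2}}"
    "rc_edges E b = {{{b, f1}, {b, g1}}, {{b, g1}, {b, f2}}, {{b, f2}, {b, g2}}, {{b, g2}, {b, f1}}}"
    "\<Lambda> {{b, f1}, {b, g1}}" "\<Lambda> {{b, f2}, {b, g2}}" "\<not> \<Lambda> {{b, g1}, {b, f2}}" "\<not> \<Lambda> {{b, g2}, {b, f1}}"
    by (rule reduced_clique_open_four_cycle[OF sg tf cu val b \<open>b \<in> E\<close>])
  have "f \<in> E" "f \<noteq> b" "u \<in> f" if "f \<in> {f1, f2}" for f
    using that cycle(1) by blast+
  moreover have "g \<in> E" "g \<noteq> b" "v \<in> g" if "g \<in> {g1, g2}" for g
    using that cycle(2) by blast+
  ultimately have "on_side E b u {b, f1}" "on_side E b u {b, f2}"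
      "\<not> on_side E b u {b, g1}" "\<not> on_side E b u {b, g2}"
    using on_side_doubleton[OF sg \<open>b \<in> E\<close>] b cut reach_refl by (metis insert_iff)+
  then show ?thesis
    using on_side_l2_edge[OF sg] cycle(6)
    by (intro typeA_self_intersection_if_separated[OF fin sg tf cu val \<open>b \<in> E\<close> cycle(3-5)])
qed

theorem lemma2p18:
  fixes V :: "'a set" and E :: "'a set set"
  assumes "finite V"
    and "simple_graph V E"
    and "connected_graph V E"
    and "triangle_free E"
    and "cubic V E"
    and "\<exists>b. is_bridge E b"
  shows "\<forall>\<Lambda>. valid_labeling E \<Lambda> \<longrightarrow>
           (\<exists>e\<in>E. \<exists>\<gamma>\<in>Gamma E \<Lambda>. typeA_self_intersection E \<Lambda> e \<gamma>)"
proof (intro allI impI)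
  fix \<Lambda> assume val: "valid_labeling E \<Lambda>"
  obtain b where br: "is_bridge E b" using assms(6) by blast
  then have "b \<in> E" unfolding is_bridge_def by blast
  moreover have "\<exists>\<gamma>\<in>Gamma E \<Lambda>. typeA_self_intersection E \<Lambda> b \<gamma>"
    by (rule bridge_typeA_self_intersection[OF assms(1,2,4,5) val br])
  ultimately show "\<exists>e\<in>E. \<exists>\<gamma>\<in>Gamma E \<Lambda>. typeA_self_intersection E \<Lambda> e \<gamma>" by blast
qed

end
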